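(* If a $\Gamma_3$-contraction $(S_1,S_2,P)$ on a Hilbert space $\mathcal H$ has a $\Gamma_3$-isometric dilation, then it has a minimal $\Gamma_3$-isometric dilation.
   Context: $\Gamma_3=\{(z_1+z_2+z_3,\,z_1z_2+z_2z_3+z_3z_1,\,z_1z_2z_3):|z_i|\le1\}$, $b\Gamma_3$ the same with $|z_i|=1$. A $\Gamma_3$-contraction is a commuting operator triple with Taylor joint spectrum in $\Gamma_3$ and $\|f(S_1,S_2,P)\|\le\sup_{\Gamma_3}|f|$ for rational $f$ with poles off $\Gamma_3$; a $\Gamma_3$-unitary is a commuting normal triple with Taylor joint spectrum in $b\Gamma_3$; a $\Gamma_3$-isometry is the restriction of a $\Gamma_3$-unitary to a common invariant subspace. A $\Gamma_3$-isometric dilation of $(S_1,S_2,P)$ is a $\Gamma_3$-isometry $(T_1,T_2,V)$ on a Hilbert space $\mathcal K\supseteq\mathcal H$ with $P_{\mathcal H}T_1^{m_1}T_2^{m_2}V^n|_{\mathcal H}=S_1^{m_1}S_2^{m_2}P^n$ for all integers $m_1,m_2,n\ge0$; it is minimal if $\mathcal K$ is the closed linear span of $\{T_1^{m_1}T_2^{m_2}V^nh:h\in\mathcal H,\ m_1,m_2,n\ge0\}$. *)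

theory Defs
  imports "HOL-Analysis.Analysis"
begin

text \<open>Hilbert spaces are modelled concretely: every complex Hilbert space is unitarily
equivalent to l2(I) for some index set I, so we work inside the ambient space
l2 of the index type 'i, and Hilbert spaces are closed subspaces of it.
Operators are functions, only their behaviour on the relevant subspace matters.\<close>

definition l2 :: "('i \<Rightarrow> complex) set" where
  "l2 = {x. (\<lambda>i. (cmod (x i))\<^sup>2) summable_on UNIV}"

definition linner :: "('i \<Rightarrow> complex) \<Rightarrow> ('i \<Rightarrow> complex) \<Rightarrow> complex" where
  "linner x y = infsum (\<lambda>i. x i * cnj (y i)) UNIV"

definition lnorm :: "('i \<Rightarrow> complex) \<Rightarrow> real" where
  "lnorm x = sqrt (infsum (\<lambda>i. (cmod (x i))\<^sup>2) UNIV)"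

definition closed_subspace :: "('i \<Rightarrow> complex) set \<Rightarrow> bool" where
  "closed_subspace M \<longleftrightarrow> M \<subseteq> l2 \<and> (\<lambda>_. 0) \<in> M
     \<and> (\<forall>x\<in>M. \<forall>y\<in>M. (\<lambda>i. x i + y i) \<in> M)
     \<and> (\<forall>c. \<forall>x\<in>M. (\<lambda>i. c * x i) \<in> M)
     \<and> (\<forall>X x. (\<forall>n. X n \<in> M) \<and> x \<in> l2 \<and> (\<lambda>n. lnorm (\<lambda>i. X n i - x i)) \<longlonglongrightarrow> 0
              \<longrightarrow> x \<in> M)"

definition op_on :: "('i \<Rightarrow> complex) set \<Rightarrow> (('i \<Rightarrow> complex) \<Rightarrow> ('i \<Rightarrow> complex)) \<Rightarrow> bool" where
  "op_on M T \<longleftrightarrow> (\<forall>x\<in>M. T x \<in> M)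
     \<and> (\<forall>x\<in>M. \<forall>y\<in>M. T (\<lambda>i. x i + y i) = (\<lambda>i. T x i + T y i))
     \<and> (\<forall>c. \<forall>x\<in>M. T (\<lambda>i. c * x i) = (\<lambda>i. c * T x i))
     \<and> (\<exists>C. \<forall>x\<in>M. lnorm (T x) \<le> C * lnorm x)"

definition opnorm :: "('i \<Rightarrow> complex) set \<Rightarrow> (('i \<Rightarrow> complex) \<Rightarrow> ('i \<Rightarrow> complex)) \<Rightarrow> real" where
  "opnorm M T = Sup {lnorm (T x) | x. x \<in> M \<and> lnorm x \<le> 1}"

definition commute_on :: "('i \<Rightarrow> complex) set \<Rightarrow> (('i \<Rightarrow> complex) \<Rightarrow> ('i \<Rightarrow> complex))
    \<Rightarrow> (('i \<Rightarrow> complex) \<Rightarrow> ('i \<Rightarrow> complex)) \<Rightarrow> bool" where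
  "commute_on M S T \<longleftrightarrow> (\<forall>x\<in>M. S (T x) = T (S x))"

definition is_adjoint :: "('i \<Rightarrow> complex) set \<Rightarrow> (('i \<Rightarrow> complex) \<Rightarrow> ('i \<Rightarrow> complex))
    \<Rightarrow> (('i \<Rightarrow> complex) \<Rightarrow> ('i \<Rightarrow> complex)) \<Rightarrow> bool" where
  "is_adjoint M T A \<longleftrightarrow> op_on M A \<and> (\<forall>x\<in>M. \<forall>y\<in>M. linner (T x) y = linner x (A y))"

definition normal_on :: "('i \<Rightarrow> complex) set \<Rightarrow> (('i \<Rightarrow> complex) \<Rightarrow> ('i \<Rightarrow> complex)) \<Rightarrow> bool" where
  "normal_on M T \<longleftrightarrow> op_on M T \<and> (\<exists>A. is_adjoint M T A \<and> commute_on M T A)"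

text \<open>Exactness of the Koszul complex 0 -> M -> M^3 -> M^3 -> M -> 0 of a commuting triple.\<close>
definition koszul_exact :: "('i \<Rightarrow> complex) set \<Rightarrow> (('i \<Rightarrow> complex) \<Rightarrow> ('i \<Rightarrow> complex))
    \<Rightarrow> (('i \<Rightarrow> complex) \<Rightarrow> ('i \<Rightarrow> complex)) \<Rightarrow> (('i \<Rightarrow> complex) \<Rightarrow> ('i \<Rightarrow> complex)) \<Rightarrow> bool" where
  "koszul_exact M A1 A2 A3 \<longleftrightarrow>
     (\<forall>x\<in>M. A1 x = (\<lambda>_. 0) \<and> A2 x = (\<lambda>_. 0) \<and> A3 x = (\<lambda>_. 0) \<longrightarrow> x = (\<lambda>_. 0))
   \<and> (\<forall>y1\<in>M. \<forall>y2\<in>M. \<forall>y3\<in>M.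
        (\<lambda>i. A2 y3 i - A3 y2 i) = (\<lambda>_. 0) \<and> (\<lambda>i. A3 y1 i - A1 y3 i) = (\<lambda>_. 0)
        \<and> (\<lambda>i. A1 y2 i - A2 y1 i) = (\<lambda>_. 0)
        \<longrightarrow> (\<exists>x\<in>M. y1 = A1 x \<and> y2 = A2 x \<and> y3 = A3 x))
   \<and> (\<forall>z1\<in>M. \<forall>z2\<in>M. \<forall>z3\<in>M.
        (\<lambda>i. A1 z1 i + A2 z2 i + A3 z3 i) = (\<lambda>_. 0)
        \<longrightarrow> (\<exists>y1\<in>M. \<exists>y2\<in>M. \<exists>y3\<in>M. z1 = (\<lambda>i. A2 y3 i - A3 y2 i)
               \<and> z2 = (\<lambda>i. A3 y1 i - A1 y3 i) \<and> z3 = (\<lambda>i. A1 y2 i - A2 y1 i)))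
   \<and> (\<forall>w\<in>M. \<exists>z1\<in>M. \<exists>z2\<in>M. \<exists>z3\<in>M. w = (\<lambda>i. A1 z1 i + A2 z2 i + A3 z3 i))"

definition shift_op :: "(('i \<Rightarrow> complex) \<Rightarrow> ('i \<Rightarrow> complex)) \<Rightarrow> complex \<Rightarrow> (('i \<Rightarrow> complex) \<Rightarrow> ('i \<Rightarrow> complex))" where
  "shift_op T l = (\<lambda>x i. T x i - l * x i)"

definition taylor_spectrum :: "('i \<Rightarrow> complex) set \<Rightarrow> (('i \<Rightarrow> complex) \<Rightarrow> ('i \<Rightarrow> complex))
    \<Rightarrow> (('i \<Rightarrow> complex) \<Rightarrow> ('i \<Rightarrow> complex)) \<Rightarrow> (('i \<Rightarrow> complex) \<Rightarrow> ('i \<Rightarrow> complex))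
    \<Rightarrow> (complex \<times> complex \<times> complex) set" where
  "taylor_spectrum M T1 T2 T3 =
     {(l1, l2, l3). \<not> koszul_exact M (shift_op T1 l1) (shift_op T2 l2) (shift_op T3 l3)}"

definition Gamma3 :: "(complex \<times> complex \<times> complex) set" where
  "Gamma3 = {(z1 + z2 + z3, z1 * z2 + z2 * z3 + z3 * z1, z1 * z2 * z3) | z1 z2 z3.
               cmod z1 \<le> 1 \<and> cmod z2 \<le> 1 \<and> cmod z3 \<le> 1}"

definition bGamma3 :: "(complex \<times> complex \<times> complex) set" where
  "bGamma3 = {(z1 + z2 + z3, z1 * z2 + z2 * z3 + z3 * z1, z1 * z2 * z3) | z1 z2 z3.
               cmod z1 = 1 \<and> cmod z2 = 1 \<and> cmod z3 = 1}"

text \<open>Polynomials in three variables as finitely supported coefficient functions.\<close>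
definition mpoly_eval :: "(nat \<times> nat \<times> nat \<Rightarrow> complex) \<Rightarrow> complex \<times> complex \<times> complex \<Rightarrow> complex" where
  "mpoly_eval c z = (case z of (z1, z2, z3) \<Rightarrow>
     (\<Sum>(a, b, d)\<in>{k. c k \<noteq> 0}. c (a, b, d) * z1 ^ a * z2 ^ b * z3 ^ d))"

definition mpoly_op :: "(nat \<times> nat \<times> nat \<Rightarrow> complex) \<Rightarrow> (('i \<Rightarrow> complex) \<Rightarrow> ('i \<Rightarrow> complex))
    \<Rightarrow> (('i \<Rightarrow> complex) \<Rightarrow> ('i \<Rightarrow> complex)) \<Rightarrow> (('i \<Rightarrow> complex) \<Rightarrow> ('i \<Rightarrow> complex))
    \<Rightarrow> ('i \<Rightarrow> complex) \<Rightarrow> ('i \<Rightarrow> complex)" where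
  "mpoly_op c T1 T2 T3 x = (\<lambda>i. \<Sum>(a, b, d)\<in>{k. c k \<noteq> 0}.
      c (a, b, d) * (T1 ^^ a) ((T2 ^^ b) ((T3 ^^ d) x)) i)"

definition op_inverse :: "('i \<Rightarrow> complex) set \<Rightarrow> (('i \<Rightarrow> complex) \<Rightarrow> ('i \<Rightarrow> complex))
    \<Rightarrow> (('i \<Rightarrow> complex) \<Rightarrow> ('i \<Rightarrow> complex))" where
  "op_inverse M Q = (SOME R. \<forall>x\<in>M. R x \<in> M \<and> Q (R x) = x \<and> R (Q x) = x)"

definition gamma3_contraction :: "('i \<Rightarrow> complex) set \<Rightarrow> (('i \<Rightarrow> complex) \<Rightarrow> ('i \<Rightarrow> complex))
    \<Rightarrow> (('i \<Rightarrow> complex) \<Rightarrow> ('i \<Rightarrow> complex)) \<Rightarrow> (('i \<Rightarrow> complex) \<Rightarrow> ('i \<Rightarrow> complex)) \<Rightarrow> bool" where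
  "gamma3_contraction H S1 S2 P \<longleftrightarrow>
     op_on H S1 \<and> op_on H S2 \<and> op_on H P
   \<and> commute_on H S1 S2 \<and> commute_on H S1 P \<and> commute_on H S2 P
   \<and> taylor_spectrum H S1 S2 P \<subseteq> Gamma3
   \<and> (\<forall>p q. finite {k. p k \<noteq> 0} \<and> finite {k. q k \<noteq> 0} \<and> (\<forall>z\<in>Gamma3. mpoly_eval q z \<noteq> 0)
        \<longrightarrow> opnorm H (\<lambda>x. mpoly_op p S1 S2 P (op_inverse H (mpoly_op q S1 S2 P) x))
             \<le> (SUP z\<in>Gamma3. cmod (mpoly_eval p z / mpoly_eval q z)))"

definition gamma3_unitary :: "('i \<Rightarrow> complex) set \<Rightarrow> (('i \<Rightarrow> complex) \<Rightarrow> ('i \<Rightarrow> complex))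
    \<Rightarrow> (('i \<Rightarrow> complex) \<Rightarrow> ('i \<Rightarrow> complex)) \<Rightarrow> (('i \<Rightarrow> complex) \<Rightarrow> ('i \<Rightarrow> complex)) \<Rightarrow> bool" where
  "gamma3_unitary N U1 U2 U3 \<longleftrightarrow>
     normal_on N U1 \<and> normal_on N U2 \<and> normal_on N U3
   \<and> commute_on N U1 U2 \<and> commute_on N U1 U3 \<and> commute_on N U2 U3
   \<and> taylor_spectrum N U1 U2 U3 \<subseteq> bGamma3"

definition gamma3_isometry :: "('i \<Rightarrow> complex) set \<Rightarrow> (('i \<Rightarrow> complex) \<Rightarrow> ('i \<Rightarrow> complex))
    \<Rightarrow> (('i \<Rightarrow> complex) \<Rightarrow> ('i \<Rightarrow> complex)) \<Rightarrow> (('i \<Rightarrow> complex) \<Rightarrow> ('i \<Rightarrow> complex)) \<Rightarrow> bool" where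
  "gamma3_isometry K T1 T2 T3 \<longleftrightarrow> closed_subspace K \<and>
     (\<exists>N U1 U2 U3. closed_subspace N \<and> K \<subseteq> N \<and> gamma3_unitary N U1 U2 U3
        \<and> (\<forall>x\<in>K. U1 x \<in> K \<and> U2 x \<in> K \<and> U3 x \<in> K)
        \<and> (\<forall>x\<in>K. T1 x = U1 x \<and> T2 x = U2 x \<and> T3 x = U3 x))"

definition orth_proj :: "('i \<Rightarrow> complex) set \<Rightarrow> ('i \<Rightarrow> complex) \<Rightarrow> ('i \<Rightarrow> complex)" where
  "orth_proj H y = (THE z. z \<in> H \<and> (\<forall>w\<in>H. linner (\<lambda>i. y i - z i) w = 0))"

definition gamma3_isometric_dilation :: "('i \<Rightarrow> complex) set \<Rightarrow> (('i \<Rightarrow> complex) \<Rightarrow> ('i \<Rightarrow> complex))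
    \<Rightarrow> (('i \<Rightarrow> complex) \<Rightarrow> ('i \<Rightarrow> complex)) \<Rightarrow> (('i \<Rightarrow> complex) \<Rightarrow> ('i \<Rightarrow> complex))
    \<Rightarrow> ('i \<Rightarrow> complex) set \<Rightarrow> (('i \<Rightarrow> complex) \<Rightarrow> ('i \<Rightarrow> complex))
    \<Rightarrow> (('i \<Rightarrow> complex) \<Rightarrow> ('i \<Rightarrow> complex)) \<Rightarrow> (('i \<Rightarrow> complex) \<Rightarrow> ('i \<Rightarrow> complex)) \<Rightarrow> bool" where
  "gamma3_isometric_dilation H S1 S2 P K T1 T2 V \<longleftrightarrow>
     closed_subspace K \<and> H \<subseteq> K \<and> gamma3_isometry K T1 T2 V
   \<and> (\<forall>m1 m2 n. \<forall>h\<in>H.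
        orth_proj H ((T1 ^^ m1) ((T2 ^^ m2) ((V ^^ n) h))) = (S1 ^^ m1) ((S2 ^^ m2) ((P ^^ n) h)))"

definition closed_span :: "('i \<Rightarrow> complex) set \<Rightarrow> ('i \<Rightarrow> complex) set" where
  "closed_span G = \<Inter>{M. closed_subspace M \<and> G \<subseteq> M}"

definition minimal_dilation :: "('i \<Rightarrow> complex) set \<Rightarrow> ('i \<Rightarrow> complex) set
    \<Rightarrow> (('i \<Rightarrow> complex) \<Rightarrow> ('i \<Rightarrow> complex))
    \<Rightarrow> (('i \<Rightarrow> complex) \<Rightarrow> ('i \<Rightarrow> complex)) \<Rightarrow> (('i \<Rightarrow> complex) \<Rightarrow> ('i \<Rightarrow> complex)) \<Rightarrow> bool" where
  "minimal_dilation H K T1 T2 V \<longleftrightarrow>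
     K = closed_span {(T1 ^^ m1) ((T2 ^^ m2) ((V ^^ n) h)) | m1 m2 n h. h \<in> H}"

end

theory Submission
  imports Defs
begin

text \<open>Cut a given \<open>\<Gamma>\<^sub>3\<close>-isometric dilation \<open>(T\<^sub>1, T\<^sub>2, V)\<close> on \<open>K\<close> down to the closed span
\<open>K\<^sub>0\<close> of the orbit \<open>{T\<^sub>1^m\<^sub>1 T\<^sub>2^m\<^sub>2 V^n h | h \<in> H}\<close>. Commutativity makes the orbit invariant under
each operator, and boundedness carries the invariance over to its closure, so \<open>K\<^sub>0\<close> is a
common invariant subspace of the ambient \<open>\<Gamma>\<^sub>3\<close>-unitary; hence the restriction is again
a \<open>\<Gamma>\<^sub>3\<close>-isometry. The compressions to \<open>H \<subseteq> K\<^sub>0\<close> are unchanged, and \<open>K\<^sub>0\<close> is minimal by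
construction.\<close>

lemma lnorm_nonneg: "lnorm x \<ge> 0"
  unfolding lnorm_def by (simp add: infsum_nonneg)

lemma closed_subspace_l2: "closed_subspace M \<Longrightarrow> M \<subseteq> l2"
  and closed_subspace_zero: "closed_subspace M \<Longrightarrow> (\<lambda>_. 0) \<in> M"
  and closed_subspace_add: "closed_subspace M \<Longrightarrow> x \<in> M \<Longrightarrow> y \<in> M \<Longrightarrow> (\<lambda>i. x i + y i) \<in> M"
  and closed_subspace_scale: "closed_subspace M \<Longrightarrow> x \<in> M \<Longrightarrow> (\<lambda>i. c * x i) \<in> M"
  and closed_subspace_limit: "closed_subspace M \<Longrightarrow> (\<And>n. X n \<in> M) \<Longrightarrow> x \<in> l2 \<Longrightarrow>
     (\<lambda>n. lnorm (\<lambda>i. X n i - x i)) \<longlonglongrightarrow> 0 \<Longrightarrow> x \<in> M"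
  unfolding closed_subspace_def by blast+

lemma closed_subspace_diff:
  assumes "closed_subspace M" "x \<in> M" "y \<in> M"
  shows "(\<lambda>i. x i - y i) \<in> M"
  using closed_subspace_add[OF assms(1,2) closed_subspace_scale[OF assms(1,3), of "-1"]] by simp

lemma op_on_add: "op_on M U \<Longrightarrow> x \<in> M \<Longrightarrow> y \<in> M \<Longrightarrow> U (\<lambda>i. x i + y i) = (\<lambda>i. U x i + U y i)"
  and op_on_scale: "op_on M U \<Longrightarrow> x \<in> M \<Longrightarrow> U (\<lambda>i. c * x i) = (\<lambda>i. c * U x i)"
  and op_on_maps: "op_on M U \<Longrightarrow> x \<in> M \<Longrightarrow> U x \<in> M"
  unfolding op_on_def by blast+

lemma op_on_diff:
  assumes "closed_subspace M" "op_on M U" "x \<in> M" "y \<in> M"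
  shows "U (\<lambda>i. x i - y i) = (\<lambda>i. U x i - U y i)"
  using op_on_add[OF assms(2,3) closed_subspace_scale[OF assms(1,4), of "-1"]]
    op_on_scale[OF assms(2,4), of "-1"] by simp

lemma op_on_tendsto:
  assumes M: "closed_subspace M" and U: "op_on M U"
    and X: "\<And>n. X n \<in> M" and x: "x \<in> M"
    and lim: "(\<lambda>n. lnorm (\<lambda>i. X n i - x i)) \<longlonglongrightarrow> 0"
  shows "(\<lambda>n. lnorm (\<lambda>i. U (X n) i - U x i)) \<longlonglongrightarrow> 0"
proof -
  obtain C where C: "\<forall>y\<in>M. lnorm (U y) \<le> C * lnorm y"
    using U unfolding op_on_def by blast
  have bound: "lnorm (\<lambda>i. U (X n) i - U x i) \<le> C * lnorm (\<lambda>i. X n i - x i)" for n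
    using C[rule_format, OF closed_subspace_diff[OF M X[of n] x]] op_on_diff[OF M U X[of n] x]
    by simp
  show ?thesis
    by (rule real_tendsto_sandwich[OF _ _ tendsto_const tendsto_mult_right_zero[OF lim, of C]])
      (auto simp: lnorm_nonneg bound)
qed

lemma op_on_restrict:
  assumes U: "op_on N U" and K: "closed_subspace K" "K \<subseteq> N"
    and maps: "\<forall>x\<in>K. U x \<in> K" and eq: "\<forall>x\<in>K. T x = U x"
  shows "op_on K T"
proof -
  obtain C where C: "\<forall>x\<in>N. lnorm (U x) \<le> C * lnorm x"
    using U unfolding op_on_def by blast
  show ?thesis
    unfolding op_on_def
  proof (intro conjI ballI allI exI[of _ C])
    fix x y assume x: "x \<in> K" and y: "y \<in> K"
    then have "x \<in> N" "y \<in> N" using K(2) by auto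
    then show "T (\<lambda>i. x i + y i) = (\<lambda>i. T x i + T y i)"
      using eq x y closed_subspace_add[OF K(1) x y] op_on_add[OF U] by simp
  next
    fix c x assume x: "x \<in> K"
    then have "x \<in> N" using K(2) by auto
    then show "T (\<lambda>i. c * x i) = (\<lambda>i. c * T x i)"
      using eq x closed_subspace_scale[OF K(1) x] op_on_scale[OF U] by simp
  next
    fix x assume x: "x \<in> K"
    then show "T x \<in> K" using maps eq by simp
    show "lnorm (T x) \<le> C * lnorm x" using C eq x K(2) by auto
  qed
qed

lemma commute_on_restrict:
  assumes "commute_on N U W" "K \<subseteq> N"
    and "\<forall>x\<in>K. U x \<in> K \<and> W x \<in> K" and "\<forall>x\<in>K. T x = U x \<and> S x = W x"
  shows "commute_on K T S"
  unfolding commute_on_def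
proof
  fix x assume "x \<in> K"
  with assms show "T (S x) = S (T x)" unfolding commute_on_def by auto
qed

lemma gamma3_isometry_op_on:
  assumes "gamma3_isometry K T1 T2 V"
  shows "op_on K T1 \<and> op_on K T2 \<and> op_on K V
    \<and> commute_on K T1 T2 \<and> commute_on K T1 V \<and> commute_on K T2 V"
proof -
  obtain N U1 U2 U3 where K: "closed_subspace K" "K \<subseteq> N" and "gamma3_unitary N U1 U2 U3"
    and inv: "\<forall>x\<in>K. U1 x \<in> K \<and> U2 x \<in> K \<and> U3 x \<in> K"
    and eq: "\<forall>x\<in>K. T1 x = U1 x \<and> T2 x = U2 x \<and> V x = U3 x"
    using assms unfolding gamma3_isometry_def by blast
  then have U: "op_on N U1" "op_on N U2" "op_on N U3"
    and UU: "commute_on N U1 U2" "commute_on N U1 U3" "commute_on N U2 U3"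
    unfolding gamma3_unitary_def normal_on_def by auto
  have "op_on K T1" using inv eq by (intro op_on_restrict[OF U(1) K]) auto
  moreover have "op_on K T2" using inv eq by (intro op_on_restrict[OF U(2) K]) auto
  moreover have "op_on K V" using inv eq by (intro op_on_restrict[OF U(3) K]) auto
  moreover have "commute_on K T1 T2" using inv eq by (intro commute_on_restrict[OF UU(1) K(2)]) auto
  moreover have "commute_on K T1 V" using inv eq by (intro commute_on_restrict[OF UU(2) K(2)]) auto
  moreover have "commute_on K T2 V" using inv eq by (intro commute_on_restrict[OF UU(3) K(2)]) auto
  ultimately show ?thesis by blast
qed

lemma gamma3_isometry_restrict:
  assumes "gamma3_isometry K T1 T2 V" "closed_subspace K0" "K0 \<subseteq> K"
    and maps: "\<forall>x\<in>K0. T1 x \<in> K0 \<and> T2 x \<in> K0 \<and> V x \<in> K0"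
  shows "gamma3_isometry K0 T1 T2 V"
proof -
  obtain N U1 U2 U3 where "closed_subspace N" "K \<subseteq> N" "gamma3_unitary N U1 U2 U3"
    and eq: "\<forall>x\<in>K. T1 x = U1 x \<and> T2 x = U2 x \<and> V x = U3 x"
    using assms(1) unfolding gamma3_isometry_def by blast
  moreover have "K0 \<subseteq> N" using \<open>K \<subseteq> N\<close> assms(3) by blast
  moreover have "\<forall>x\<in>K0. T1 x = U1 x \<and> T2 x = U2 x \<and> V x = U3 x"
    using eq assms(3) by blast
  moreover from this have "\<forall>x\<in>K0. U1 x \<in> K0 \<and> U2 x \<in> K0 \<and> U3 x \<in> K0"
    using maps by simp
  ultimately show ?thesis
    unfolding gamma3_isometry_def using assms(2) by blast
qed

lemma gamma3_isometric_dilation_restrict: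
  assumes "gamma3_isometric_dilation H S1 S2 P K T1 T2 V"
    and "closed_subspace K0" "H \<subseteq> K0" "K0 \<subseteq> K"
    and "\<forall>x\<in>K0. T1 x \<in> K0 \<and> T2 x \<in> K0 \<and> V x \<in> K0"
  shows "gamma3_isometric_dilation H S1 S2 P K0 T1 T2 V"
  using assms gamma3_isometry_restrict[OF _ assms(2,4,5)]
  unfolding gamma3_isometric_dilation_def by blast

lemma closed_span_least: "closed_subspace M \<Longrightarrow> G \<subseteq> M \<Longrightarrow> closed_span G \<subseteq> M"
  unfolding closed_span_def by blast

lemma closed_span_superset: "G \<subseteq> closed_span G"
  unfolding closed_span_def by blast

lemma mem_closed_span: "x \<in> closed_span G \<longleftrightarrow> (\<forall>M. closed_subspace M \<and> G \<subseteq> M \<longrightarrow> x \<in> M)"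
  unfolding closed_span_def by blast

text \<open>The hypothesis \<open>G \<subseteq> K\<close> is needed only because the intersection of the empty
family is the whole function space, which is not contained in \<open>l2\<close>.\<close>
lemma closed_subspace_closed_span:
  assumes "closed_subspace K" "G \<subseteq> K"
  shows "closed_subspace (closed_span G)"
proof -
  have "closed_span G \<subseteq> l2"
    using closed_span_least[OF assms] closed_subspace_l2[OF assms(1)] by blast
  then show ?thesis
    unfolding closed_subspace_def[of "closed_span G"]
  proof (intro conjI ballI allI impI)
    show "(\<lambda>_. 0) \<in> closed_span G" unfolding mem_closed_span using closed_subspace_zero by blast
    fix x y assume "x \<in> closed_span G" "y \<in> closed_span G"
    then show "(\<lambda>i. x i + y i) \<in> closed_span G"
      unfolding mem_closed_span using closed_subspace_add by blast
  next
    fix c x assume "x \<in> closed_span G"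
    then show "(\<lambda>i. c * x i) \<in> closed_span G"
      unfolding mem_closed_span using closed_subspace_scale by blast
  next
    fix X x assume "(\<forall>n. X n \<in> closed_span G) \<and> x \<in> l2 \<and> (\<lambda>n. lnorm (\<lambda>i. X n i - x i)) \<longlonglongrightarrow> 0"
    then show "x \<in> closed_span G"
      unfolding mem_closed_span using closed_subspace_limit by blast
  qed
qed

lemma closed_span_invariant:
  assumes K: "closed_subspace K" and U: "op_on K U" and GK: "G \<subseteq> K"
    and UG: "\<forall>g\<in>G. U g \<in> closed_span G"
  shows "\<forall>x\<in>closed_span G. U x \<in> closed_span G"
proof -
  define C where "C = closed_span G"
  have C: "closed_subspace C" unfolding C_def by (rule closed_subspace_closed_span[OF K GK])
  have CK: "C \<subseteq> K" unfolding C_def by (rule closed_span_least[OF K GK])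
  define M where "M = {x\<in>C. U x \<in> C}"
  have "closed_subspace M"
    unfolding closed_subspace_def
  proof (intro conjI ballI allI impI)
    show "M \<subseteq> l2" using closed_subspace_l2[OF C] unfolding M_def by blast
    show "(\<lambda>_. 0) \<in> M"
      using closed_subspace_zero[OF C] op_on_scale[OF U closed_subspace_zero[OF K], of 0]
      unfolding M_def by simp
  next
    fix x y assume "x \<in> M" "y \<in> M"
    then have "x \<in> K" "y \<in> K" "(\<lambda>i. U x i + U y i) \<in> C"
      using CK closed_subspace_add[OF C] unfolding M_def by auto
    with \<open>x \<in> M\<close> \<open>y \<in> M\<close> show "(\<lambda>i. x i + y i) \<in> M"
      using op_on_add[OF U] closed_subspace_add[OF C] unfolding M_def by auto
  next
    fix c x assume "x \<in> M"
    then have "x \<in> K" "(\<lambda>i. c * U x i) \<in> C"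
      using CK closed_subspace_scale[OF C] unfolding M_def by auto
    with \<open>x \<in> M\<close> show "(\<lambda>i. c * x i) \<in> M"
      using op_on_scale[OF U] closed_subspace_scale[OF C] unfolding M_def by auto
  next
    fix X x assume lim: "(\<forall>n. X n \<in> M) \<and> x \<in> l2 \<and> (\<lambda>n. lnorm (\<lambda>i. X n i - x i)) \<longlonglongrightarrow> 0"
    then have X: "X n \<in> C" "U (X n) \<in> C" for n unfolding M_def by auto
    with lim have x: "x \<in> C" using closed_subspace_limit[OF C] by blast
    have xK: "x \<in> K" using x CK by blast
    have "U x \<in> l2" using op_on_maps[OF U xK] closed_subspace_l2[OF K] by blast
    moreover have "(\<lambda>n. lnorm (\<lambda>i. U (X n) i - U x i)) \<longlonglongrightarrow> 0"
      using op_on_tendsto[OF K U _ xK] X(1) CK lim by blast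
    ultimately have "U x \<in> C" by (rule closed_subspace_limit[OF C X(2)])
    with x show "x \<in> M" unfolding M_def by blast
  qed
  moreover have "G \<subseteq> M" using UG closed_span_superset unfolding M_def C_def by blast
  ultimately have "C \<subseteq> M" unfolding C_def by (rule closed_span_least)
  then show ?thesis unfolding M_def C_def by blast
qed

lemma funpow_maps: "\<forall>x\<in>K. B x \<in> K \<Longrightarrow> x \<in> K \<Longrightarrow> (B ^^ m) x \<in> K"
  by (induction m) auto

lemma funpow_commute:
  assumes "\<forall>x\<in>K. B x \<in> K" "commute_on K A B" "x \<in> K"
  shows "A ((B ^^ m) x) = (B ^^ m) (A x)"
  using assms(3)
proof (induction m arbitrary: x)
  case 0
  then show ?case by simp
next
  case (Suc m x)
  have "A ((B ^^ Suc m) x) = A ((B ^^ m) (B x))" by (simp add: funpow_swap1)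
  also have "\<dots> = (B ^^ m) (A (B x))" using Suc assms(1) by blast
  also have "\<dots> = (B ^^ m) (B (A x))" using assms(2) Suc.prems unfolding commute_on_def by simp
  finally show ?case by (simp add: funpow_swap1)
qed

definition orbit3 :: "('i \<Rightarrow> complex) set \<Rightarrow> (('i \<Rightarrow> complex) \<Rightarrow> ('i \<Rightarrow> complex))
    \<Rightarrow> (('i \<Rightarrow> complex) \<Rightarrow> ('i \<Rightarrow> complex)) \<Rightarrow> (('i \<Rightarrow> complex) \<Rightarrow> ('i \<Rightarrow> complex))
    \<Rightarrow> ('i \<Rightarrow> complex) set" where
  "orbit3 H T1 T2 T3 = {(T1 ^^ m1) ((T2 ^^ m2) ((T3 ^^ n) h)) | m1 m2 n h. h \<in> H}"

lemma orbit3_memI: "h \<in> H \<Longrightarrow> (T1 ^^ m1) ((T2 ^^ m2) ((T3 ^^ n) h)) \<in> orbit3 H T1 T2 T3"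
  unfolding orbit3_def by blast

lemma orbit3_superset: "H \<subseteq> orbit3 H T1 T2 T3"
proof
  fix h assume "h \<in> H"
  then have "(T1 ^^ 0) ((T2 ^^ 0) ((T3 ^^ 0) h)) \<in> orbit3 H T1 T2 T3" by (rule orbit3_memI)
  then show "h \<in> orbit3 H T1 T2 T3" by simp
qed

lemma orbit3_subset:
  assumes "H \<subseteq> K" "\<forall>x\<in>K. T1 x \<in> K" "\<forall>x\<in>K. T2 x \<in> K" "\<forall>x\<in>K. T3 x \<in> K"
  shows "orbit3 H T1 T2 T3 \<subseteq> K"
proof
  fix g assume "g \<in> orbit3 H T1 T2 T3"
  then obtain m1 m2 n h where "g = (T1 ^^ m1) ((T2 ^^ m2) ((T3 ^^ n) h))" and "h \<in> K"
    using assms(1) unfolding orbit3_def by blast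
  then show "g \<in> K"
    using funpow_maps[OF assms(2)] funpow_maps[OF assms(3)] funpow_maps[OF assms(4)] by simp
qed

lemma orbit3_invariant:
  assumes "H \<subseteq> K" and maps: "\<forall>x\<in>K. T1 x \<in> K" "\<forall>x\<in>K. T2 x \<in> K" "\<forall>x\<in>K. T3 x \<in> K"
    and "commute_on K T1 T2" "commute_on K T1 T3" "commute_on K T2 T3"
    and g: "g \<in> orbit3 H T1 T2 T3"
  shows "T1 g \<in> orbit3 H T1 T2 T3 \<and> T2 g \<in> orbit3 H T1 T2 T3 \<and> T3 g \<in> orbit3 H T1 T2 T3"
proof -
  obtain m1 m2 n h where g: "g = (T1 ^^ m1) ((T2 ^^ m2) ((T3 ^^ n) h))" and h: "h \<in> H"
    using g unfolding orbit3_def by blast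
  then have z: "(T3 ^^ n) h \<in> K" and y: "(T2 ^^ m2) ((T3 ^^ n) h) \<in> K"
    using assms(1) funpow_maps[OF maps(3)] funpow_maps[OF maps(2)] by blast+
  have "commute_on K T2 T1" "commute_on K T3 T1" "commute_on K T3 T2"
    using assms(5-7) unfolding commute_on_def by auto
  then have "T1 g = (T1 ^^ Suc m1) ((T2 ^^ m2) ((T3 ^^ n) h))"
    and "T2 g = (T1 ^^ m1) ((T2 ^^ Suc m2) ((T3 ^^ n) h))"
    and "T3 g = (T1 ^^ m1) ((T2 ^^ m2) ((T3 ^^ Suc n) h))"
    using g funpow_commute[OF maps(1) _ y] funpow_commute[OF maps(2) _ z] by simp_all
  then show ?thesis using orbit3_memI[OF h] by presburger
qed

theorem proposition6p2:
  fixes H :: "('i \<Rightarrow> complex) set"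
    and S1 S2 P :: "('i \<Rightarrow> complex) \<Rightarrow> ('i \<Rightarrow> complex)"
  assumes "closed_subspace H"
    and "gamma3_contraction H S1 S2 P"
    and "\<exists>K T1 T2 V. gamma3_isometric_dilation H S1 S2 P K T1 T2 V"
  shows "\<exists>K T1 T2 V. gamma3_isometric_dilation H S1 S2 P K T1 T2 V
                    \<and> minimal_dilation H K T1 T2 V"
proof -
  obtain K T1 T2 V where D: "gamma3_isometric_dilation H S1 S2 P K T1 T2 V"
    using assms(3) by blast
  then have K: "closed_subspace K" and HK: "H \<subseteq> K" and ops: "op_on K T1" "op_on K T2" "op_on K V"
    and comm: "commute_on K T1 T2" "commute_on K T1 V" "commute_on K T2 V"
    using gamma3_isometry_op_on unfolding gamma3_isometric_dilation_def by blast+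
  have maps: "\<forall>x\<in>K. T1 x \<in> K" "\<forall>x\<in>K. T2 x \<in> K" "\<forall>x\<in>K. V x \<in> K"
    using ops op_on_maps by blast+
  define G where "G = orbit3 H T1 T2 V"
  have GK: "G \<subseteq> K" unfolding G_def using orbit3_subset[OF HK maps] .
  have "\<forall>g\<in>G. T1 g \<in> G \<and> T2 g \<in> G \<and> V g \<in> G"
    unfolding G_def using orbit3_invariant[OF HK maps comm] by blast
  then have "\<forall>g\<in>G. T1 g \<in> closed_span G" "\<forall>g\<in>G. T2 g \<in> closed_span G"
    "\<forall>g\<in>G. V g \<in> closed_span G"
    using closed_span_superset[of G] by blast+
  then have "\<forall>x\<in>closed_span G. T1 x \<in> closed_span G \<and> T2 x \<in> closed_span G \<and> V x \<in> closed_span G"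
    using closed_span_invariant[OF K ops(1) GK] closed_span_invariant[OF K ops(2) GK]
      closed_span_invariant[OF K ops(3) GK] by blast
  moreover have "H \<subseteq> closed_span G"
    using orbit3_superset closed_span_superset unfolding G_def by blast
  ultimately have "gamma3_isometric_dilation H S1 S2 P (closed_span G) T1 T2 V"
    by (rule gamma3_isometric_dilation_restrict[OF D closed_subspace_closed_span[OF K GK] _
          closed_span_least[OF K GK], rotated])
  moreover have "minimal_dilation H (closed_span G) T1 T2 V"
    unfolding minimal_dilation_def G_def orbit3_def ..
  ultimately show ?thesis by blast
qed

end
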